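(* Fix $a>1$ and define, for $(x,y)\in\mathbb R^2$ with $x+y\neq 0$, $$T(x,y)=\big(f(x,y),g(x,y)\big),\qquad f(x,y)=\frac{a^x(a^{2y}-1)}{(a^x+a^y)(a^{x+y}-1)},\quad g(x,y)=\frac{2a^{x+y}}{(a^x+a^y)(a^{x+y}-1)}.$$ Then: (a) for every $c$, the image under $T$ of the part of the vertical line $x=c$ lying in the half-plane $x+y>0$ is contained in a line through the point $P=(1,0)$ of the $uv$-plane; (b) for every $c$, the image under $T$ of the part of the horizontal line $y=c$ lying in the half-plane $x+y>0$ is contained in a line through the origin $O=(0,0)$ of the $uv$-plane; (c) for every axes-parallel square with vertices $A=(x,y)$, $B=(x+l,y)$, $C=(x+l,y+l)$, $D=(x,y+l)$, where $l>0$ and $x+y>0$ (so the square lies in the half-plane $x+y>0$), the points $A'=T(A),B'=T(B),C'=T(C),D'=T(D)$ are the vertices, in this order, of a tangential quadrilateral; in particular $|A'B'|+|C'D'|=|B'C'|+|D'A'|$.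
   Context: A quadrilateral is tangential if it admits an inscribed circle tangent to all four sides; equivalently (Pitot–Steiner), the sums of the lengths of the two pairs of opposite sides are equal. *)

theory Defs
  imports "HOL-Analysis.Analysis"
begin

text \<open>Points of the uv-plane are represented as complex numbers u + i v.\<close>

definition Tf :: "real \<Rightarrow> real \<Rightarrow> real \<Rightarrow> real" where
  "Tf a x y = a powr x * (a powr (2 * y) - 1) / ((a powr x + a powr y) * (a powr (x + y) - 1))"

definition Tg :: "real \<Rightarrow> real \<Rightarrow> real \<Rightarrow> real" where
  "Tg a x y = 2 * a powr (x + y) / ((a powr x + a powr y) * (a powr (x + y) - 1))"

definition T :: "real \<Rightarrow> real \<Rightarrow> real \<Rightarrow> complex" where
  "T a x y = Complex (Tf a x y) (Tg a x y)"

definition line_through :: "complex \<Rightarrow> complex \<Rightarrow> complex set" where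
  "line_through p d = {p + of_real t * d | t. True}"

definition cross2 :: "complex \<Rightarrow> complex \<Rightarrow> real" where
  "cross2 u v = Re u * Im v - Im u * Re v"

definition convex_quadrilateral :: "complex \<Rightarrow> complex \<Rightarrow> complex \<Rightarrow> complex \<Rightarrow> bool" where
  "convex_quadrilateral A B C D \<longleftrightarrow>
     (cross2 (B - A) (C - B) > 0 \<and> cross2 (C - B) (D - C) > 0 \<and>
      cross2 (D - C) (A - D) > 0 \<and> cross2 (A - D) (B - A) > 0) \<or>
     (cross2 (B - A) (C - B) < 0 \<and> cross2 (C - B) (D - C) < 0 \<and>
      cross2 (D - C) (A - D) < 0 \<and> cross2 (A - D) (B - A) < 0)"

definition tangential_quadrilateral :: "complex \<Rightarrow> complex \<Rightarrow> complex \<Rightarrow> complex \<Rightarrow> bool" where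
  "tangential_quadrilateral A B C D \<longleftrightarrow>
     convex_quadrilateral A B C D \<and>
     (\<exists>z r. r > 0 \<and> z \<in> interior (convex hull {A, B, C, D}) \<and>
        infdist z (closed_segment A B) = r \<and> infdist z (closed_segment B C) = r \<and>
        infdist z (closed_segment C D) = r \<and> infdist z (closed_segment D A) = r)"

end

theory Submission
  imports Defs
begin

text \<open>In the coordinates \<open>s = sinh (x * ln a)\<close>, \<open>t = sinh (y * ln a)\<close> the map \<open>T\<close> becomes the
  projective map \<open>(s, t) \<mapsto> (t, 1) / (s + t)\<close>, which sends the lines \<open>s = const\<close> to lines through
  \<open>1\<close> and the lines \<open>t = const\<close> to lines through \<open>0\<close>. A square with centre \<open>(u, v) / ln a\<close> and
  side \<open>2 * h / ln a\<close> becomes the rectangle \<open>[sinh (u - h), sinh (u + h)] \<times> [sinh (v - h), sinh (v + h)]\<close>,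
  whose image is a convex quadrilateral. The addition theorems for \<open>sinh\<close> and \<open>cosh\<close> show that the
  image of \<open>(sinh u / cosh h, sinh v / cosh h)\<close> is at distance \<open>sinh h / (sinh u + sinh v)\<close> from all
  four sides, with the foot of each perpendicular on the side itself. The Pitot equality then follows
  because the two tangent segments from a vertex to the incircle have equal length.\<close>

section \<open>Circles touching the sides of a quadrilateral\<close>

definition circle_touches_segment :: "'a::euclidean_space \<Rightarrow> real \<Rightarrow> 'a \<Rightarrow> 'a \<Rightarrow> 'a \<Rightarrow> bool" where
  "circle_touches_segment z r P Q F \<longleftrightarrow>
     F \<in> closed_segment P Q \<and> inner (z - F) (Q - P) = 0 \<and> dist z F = r"

lemma circle_touches_segment_commute:
  "circle_touches_segment z r P Q F \<Longrightarrow> circle_touches_segment z r Q P F"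
  unfolding circle_touches_segment_def
  by (metis closed_segment_commute inner_minus_right minus_diff_eq neg_equal_0_iff_equal)

lemma dist_sq_eq_if_circle_touches_segment:
  assumes "circle_touches_segment z r P Q F" "v \<in> closed_segment P Q"
  shows "(dist v z)\<^sup>2 = (dist v F)\<^sup>2 + r\<^sup>2"
proof -
  obtain \<alpha> \<beta> where F: "F = (1 - \<alpha>) *\<^sub>R P + \<alpha> *\<^sub>R Q" and v: "v = (1 - \<beta>) *\<^sub>R P + \<beta> *\<^sub>R Q"
    using assms unfolding circle_touches_segment_def in_segment by blast
  have "v - F = (\<beta> - \<alpha>) *\<^sub>R (Q - P)"
    unfolding F v by (simp add: algebra_simps)
  then have "orthogonal (v - F) (F - z)"
    using assms(1) by (simp add: circle_touches_segment_def orthogonal_def inner_commute inner_diff_right)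
  then have "(norm ((v - F) + (F - z)))\<^sup>2 = (norm (v - F))\<^sup>2 + (norm (F - z))\<^sup>2"
    by (rule norm_add_Pythagorean)
  then show ?thesis
    using assms(1) by (simp add: circle_touches_segment_def dist_norm norm_minus_commute)
qed

lemma infdist_eq_if_circle_touches_segment:
  assumes "circle_touches_segment z r P Q F"
  shows "infdist z (closed_segment P Q) = r"
proof -
  have "r \<le> dist z v" if "v \<in> closed_segment P Q" for v
  proof -
    have "r\<^sup>2 \<le> (dist v z)\<^sup>2"
      using dist_sq_eq_if_circle_touches_segment[OF assms that] by simp
    moreover have "0 \<le> r"
      using assms by (auto simp: circle_touches_segment_def)
    ultimately show ?thesis
      by (metis dist_commute power2_le_imp_le zero_le_dist)
  qed
  moreover have "F \<in> closed_segment P Q" "dist z F = r"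
    using assms by (auto simp: circle_touches_segment_def)
  moreover have "closed_segment P Q \<noteq> {}"
    by auto
  ultimately show ?thesis
    by (simp add: infdist_notempty) (intro cInf_eq_minimum; auto intro!: image_eqI)
qed

lemma dist_eq_tangent_length_if_circle_touches_segment:
  assumes "circle_touches_segment z r P Q F"
  shows "dist P F = sqrt ((dist P z)\<^sup>2 - r\<^sup>2)" "dist Q F = sqrt ((dist Q z)\<^sup>2 - r\<^sup>2)"
  using dist_sq_eq_if_circle_touches_segment[OF assms, of P]
    dist_sq_eq_if_circle_touches_segment[OF assms, of Q] by simp_all

lemma pitot_if_circle_touches_sides:
  assumes "circle_touches_segment z r A B F\<^sub>1" "circle_touches_segment z r B C F\<^sub>2"
    "circle_touches_segment z r C D F\<^sub>3" "circle_touches_segment z r D A F\<^sub>4"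
  shows "dist A B + dist C D = dist B C + dist D A"
proof -
  define tangent_length where "tangent_length X = sqrt ((dist X z)\<^sup>2 - r\<^sup>2)" for X
  have side: "dist P Q = tangent_length P + tangent_length Q" if "circle_touches_segment z r P Q F" for P Q F
  proof -
    have "dist P Q = dist P F + dist F Q"
      using that by (simp add: circle_touches_segment_def between_mem_segment[symmetric] between)
    then show ?thesis
      using dist_eq_tangent_length_if_circle_touches_segment[OF that]
      by (simp add: tangent_length_def dist_commute)
  qed
  show ?thesis
    using side[OF assms(1)] side[OF assms(2)] side[OF assms(3)] side[OF assms(4)] by simp
qed

lemma circle_touches_segment_reflect:
  fixes z P Q F :: complex
  assumes "circle_touches_segment z r P Q F"
  shows "circle_touches_segment (1 - cnj z) r (1 - cnj P) (1 - cnj Q) (1 - cnj F)"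
proof -
  obtain u where u: "0 \<le> u" "u \<le> 1" "F = (1 - u) *\<^sub>R P + u *\<^sub>R Q"
    using assms unfolding circle_touches_segment_def in_segment by blast
  have "1 - cnj F \<in> closed_segment (1 - cnj P) (1 - cnj Q)"
    unfolding in_segment using u by (intro exI[of _ u]) (simp add: complex_eq_iff algebra_simps)
  moreover have "inner (1 - cnj z - (1 - cnj F)) (1 - cnj Q - (1 - cnj P)) = inner (z - F) (Q - P)"
    by (simp add: inner_complex_def algebra_simps)
  moreover have "dist (1 - cnj z) (1 - cnj F) = dist z F"
  proof -
    have "dist (1 - cnj z) (1 - cnj F) = norm (cnj (F - z))"
      by (simp add: dist_norm)
    then show ?thesis
      by (simp only: complex_mod_cnj dist_norm norm_minus_commute)
  qed
  ultimately show ?thesis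
    using assms by (simp add: circle_touches_segment_def)
qed

lemma tangential_quadrilateralI:
  assumes "convex_quadrilateral A B C D" "0 < r" "z \<in> interior (convex hull {A, B, C, D})"
    "circle_touches_segment z r A B F\<^sub>1" "circle_touches_segment z r B C F\<^sub>2"
    "circle_touches_segment z r C D F\<^sub>3" "circle_touches_segment z r D A F\<^sub>4"
  shows "tangential_quadrilateral A B C D"
  unfolding tangential_quadrilateral_def
  using assms infdist_eq_if_circle_touches_segment by blast

lemma cross2_eq_0_if_collinear:
  assumes "collinear {A, B, C}"
  shows "cross2 (B - A) (C - B) = 0"
proof -
  have "A = C \<or> (\<exists>u. B = u *\<^sub>R A + (1 - u) *\<^sub>R C)"
    using assms by (simp add: collinear_3_expand)
  then show ?thesis
  proof
    assume "A = C"
    then show ?thesis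
      by (simp add: cross2_def algebra_simps)
  next
    assume "\<exists>u. B = u *\<^sub>R A + (1 - u) *\<^sub>R C"
    then obtain u where B: "B = u *\<^sub>R A + (1 - u) *\<^sub>R C"
      by blast
    have sides: "B - A = (1 - u) *\<^sub>R (C - A)" "C - B = u *\<^sub>R (C - A)"
      by (simp_all add: B algebra_simps)
    show ?thesis
      unfolding sides cross2_def by (simp add: algebra_simps)
  qed
qed

lemma convex_combination_in_interior_quadrilateral:
  assumes "convex_quadrilateral A B C D"
    and "0 < \<alpha>" "0 < \<beta>" "0 < \<gamma>" "0 < \<delta>" "\<alpha> + \<beta> + \<gamma> + \<delta> = 1"
  shows "\<alpha> *\<^sub>R A + \<beta> *\<^sub>R B + \<gamma> *\<^sub>R C + \<delta> *\<^sub>R D \<in> interior (convex hull {A, B, C, D})"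
proof -
  have turns: "cross2 (B - A) (C - B) \<noteq> 0" "cross2 (C - B) (D - C) \<noteq> 0" "cross2 (D - C) (A - D) \<noteq> 0"
    using assms(1) unfolding convex_quadrilateral_def by auto
  then have distinct: "A \<noteq> B" "A \<noteq> C" "A \<noteq> D" "B \<noteq> C" "B \<noteq> D" "C \<noteq> D"
    by (auto simp: cross2_def algebra_simps)
  have "\<not> affine_dependent {A, B, C}"
    using turns(1) cross2_eq_0_if_collinear collinear_3_eq_affine_dependent by blast
  moreover have "card {A, B, C} = Suc DIM(complex)"
    using distinct by simp
  ultimately have "interior (convex hull {A, B, C}) \<noteq> {}"
    using interior_convex_hull_eq_empty by blast
  moreover have "interior (convex hull {A, B, C}) \<subseteq> interior (convex hull {A, B, C, D})"
    by (intro interior_mono hull_mono) auto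
  ultimately have interior: "rel_interior (convex hull {A, B, C, D}) = interior (convex hull {A, B, C, D})"
    by (intro rel_interior_nonempty_interior) blast
  define w where "w X = (if X = A then \<alpha> else if X = B then \<beta> else if X = C then \<gamma> else \<delta>)" for X
  have "(\<forall>X \<in> {A, B, C, D}. 0 < w X) \<and> sum w {A, B, C, D} = 1 \<and>
      (\<Sum>X\<in>{A, B, C, D}. w X *\<^sub>R X) = \<alpha> *\<^sub>R A + \<beta> *\<^sub>R B + \<gamma> *\<^sub>R C + \<delta> *\<^sub>R D"
    using assms(2-6) distinct by (simp add: w_def algebra_simps)
  then show ?thesis
    using explicit_subset_rel_interior_convex_hull_minimal[of "{A, B, C, D}"] interior by blast
qed

section \<open>The map in hyperbolic coordinates\<close>

definition proj_map :: "real \<Rightarrow> real \<Rightarrow> complex" where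
  "proj_map s t = Complex (t / (s + t)) (1 / (s + t))"

lemma proj_map_eq_scaleR: "proj_map s t = (1 / (s + t)) *\<^sub>R Complex t 1"
  by (simp add: proj_map_def complex_eq_iff)

lemma proj_map_in_line_through_0: "proj_map s t \<in> line_through 0 (Complex t 1)"
proof -
  have "proj_map s t = 0 + of_real (1 / (s + t)) * Complex t 1"
    by (simp add: proj_map_eq_scaleR scaleR_conv_of_real)
  then show ?thesis
    unfolding line_through_def by blast
qed

lemma proj_map_in_line_through_1:
  assumes "s + t \<noteq> 0"
  shows "proj_map s t \<in> line_through 1 (Complex (- s) 1)"
proof -
  have "proj_map s t = 1 + of_real (1 / (s + t)) * Complex (- s) 1"
    using assms by (simp add: proj_map_def complex_eq_iff field_simps)
  then show ?thesis
    unfolding line_through_def by blast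
qed

lemma proj_map_swap: "s + t \<noteq> 0 \<Longrightarrow> proj_map s t = 1 - cnj (proj_map t s)"
  by (simp add: proj_map_def complex_eq_iff field_simps)

lemma T_eq_proj_map_sinh:
  assumes "0 < a"
  shows "T a x y = proj_map (sinh (x * ln a)) (sinh (y * ln a))"
proof -
  define p q where "p = a powr x" and "q = a powr y"
  have pq: "0 < p" "0 < q"
    using assms by (simp_all add: p_def q_def)
  have sinh: "sinh (x * ln a) = (p - 1 / p) / 2" "sinh (y * ln a) = (q - 1 / q) / 2"
    using sinh_ln_real[of p] sinh_ln_real[of q] pq assms
    by (simp_all add: p_def q_def ln_powr inverse_eq_divide)
  have powr: "a powr (x + y) = p * q" "a powr (2 * y) = q * q"
    by (simp_all add: p_def q_def powr_add[symmetric])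
  have T_pq: "T a x y = Complex (p * (q * q - 1) / ((p + q) * (p * q - 1))) (2 * (p * q) / ((p + q) * (p * q - 1)))"
    unfolding T_def Tf_def Tg_def powr p_def q_def ..
  have sum: "(p - 1 / p) / 2 + (q - 1 / q) / 2 = (p + q) * (p * q - 1) / (2 * p * q)"
    using pq by (simp add: field_simps)
  have "(q - 1 / q) / 2 * (2 * p * q) = p * (q * q - 1)"
    using pq by (simp add: field_simps)
  then have re: "(q - 1 / q) / 2 / ((p + q) * (p * q - 1) / (2 * p * q)) = p * (q * q - 1) / ((p + q) * (p * q - 1))"
    by (simp only: divide_divide_eq_right)
  have im: "1 / ((p + q) * (p * q - 1) / (2 * p * q)) = 2 * (p * q) / ((p + q) * (p * q - 1))"
    by (simp add: mult.assoc)
  show ?thesis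
    unfolding T_pq proj_map_def sinh sum re im ..
qed

lemma proj_map_diff_fst:
  assumes "s + t \<noteq> 0" "s' + t \<noteq> 0"
  shows "proj_map s' t - proj_map s t = ((s - s') / ((s + t) * (s' + t))) *\<^sub>R Complex t 1"
  using assms by (simp add: proj_map_def complex_eq_iff field_simps)

lemma proj_map_diff_snd:
  assumes "s + t \<noteq> 0" "s + t' \<noteq> 0"
  shows "proj_map s t' - proj_map s t = ((t' - t) / ((s + t) * (s + t'))) *\<^sub>R Complex s (-1)"
  using assms by (simp add: proj_map_def complex_eq_iff field_simps)

lemma cross2_scaleR: "cross2 (a *\<^sub>R p) (b *\<^sub>R q) = a * b * cross2 p q"
  by (simp add: cross2_def algebra_simps)

lemma convex_quadrilateral_proj_map:
  assumes "s\<^sub>1 < s\<^sub>2" "t\<^sub>1 < t\<^sub>2" "0 < s\<^sub>1 + t\<^sub>1"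
  shows "convex_quadrilateral (proj_map s\<^sub>1 t\<^sub>1) (proj_map s\<^sub>2 t\<^sub>1) (proj_map s\<^sub>2 t\<^sub>2) (proj_map s\<^sub>1 t\<^sub>2)"
proof -
  have pos: "0 < s\<^sub>1 + t\<^sub>1" "0 < s\<^sub>2 + t\<^sub>1" "0 < s\<^sub>1 + t\<^sub>2" "0 < s\<^sub>2 + t\<^sub>2"
    using assms by linarith+
  define k\<^sub>1 k\<^sub>2 k\<^sub>3 k\<^sub>4 where
    "k\<^sub>1 = (s\<^sub>1 - s\<^sub>2) / ((s\<^sub>1 + t\<^sub>1) * (s\<^sub>2 + t\<^sub>1))" and "k\<^sub>2 = (t\<^sub>2 - t\<^sub>1) / ((s\<^sub>2 + t\<^sub>1) * (s\<^sub>2 + t\<^sub>2))" and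
    "k\<^sub>3 = (s\<^sub>2 - s\<^sub>1) / ((s\<^sub>2 + t\<^sub>2) * (s\<^sub>1 + t\<^sub>2))" and "k\<^sub>4 = (t\<^sub>1 - t\<^sub>2) / ((s\<^sub>1 + t\<^sub>2) * (s\<^sub>1 + t\<^sub>1))"
  have signs: "k\<^sub>1 < 0" "0 < k\<^sub>2" "0 < k\<^sub>3" "k\<^sub>4 < 0"
    using assms(1,2) pos by (simp_all add: k\<^sub>1_def k\<^sub>2_def k\<^sub>3_def k\<^sub>4_def divide_neg_pos)
  have sides:
    "proj_map s\<^sub>2 t\<^sub>1 - proj_map s\<^sub>1 t\<^sub>1 = k\<^sub>1 *\<^sub>R Complex t\<^sub>1 1"
    "proj_map s\<^sub>2 t\<^sub>2 - proj_map s\<^sub>2 t\<^sub>1 = k\<^sub>2 *\<^sub>R Complex s\<^sub>2 (-1)"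
    "proj_map s\<^sub>1 t\<^sub>2 - proj_map s\<^sub>2 t\<^sub>2 = k\<^sub>3 *\<^sub>R Complex t\<^sub>2 1"
    "proj_map s\<^sub>1 t\<^sub>1 - proj_map s\<^sub>1 t\<^sub>2 = k\<^sub>4 *\<^sub>R Complex s\<^sub>1 (-1)"
    using pos unfolding k\<^sub>1_def k\<^sub>2_def k\<^sub>3_def k\<^sub>4_def
    by (simp_all add: proj_map_diff_fst proj_map_diff_snd)
  have "0 < k\<^sub>1 * k\<^sub>2 * - (t\<^sub>1 + s\<^sub>2)" "0 < k\<^sub>2 * k\<^sub>3 * (s\<^sub>2 + t\<^sub>2)"
    "0 < k\<^sub>3 * k\<^sub>4 * - (t\<^sub>2 + s\<^sub>1)" "0 < k\<^sub>4 * k\<^sub>1 * (s\<^sub>1 + t\<^sub>1)"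
    using signs pos by (simp_all add: mult_neg_neg mult_pos_neg mult_neg_pos add.commute)
  then show ?thesis
    unfolding convex_quadrilateral_def sides cross2_scaleR by (simp add: cross2_def)
qed

lemma strict_convex_combination_between:
  fixes x\<^sub>1 x x\<^sub>2 :: real
  assumes "x\<^sub>1 < x" "x < x\<^sub>2"
  obtains a\<^sub>1 a\<^sub>2 where "0 < a\<^sub>1" "0 < a\<^sub>2" "a\<^sub>1 + a\<^sub>2 = 1" "a\<^sub>1 * x\<^sub>1 + a\<^sub>2 * x\<^sub>2 = x"
proof
  show "0 < (x\<^sub>2 - x) / (x\<^sub>2 - x\<^sub>1)" "0 < (x - x\<^sub>1) / (x\<^sub>2 - x\<^sub>1)"
    using assms by simp_all
  have "x\<^sub>2 - x\<^sub>1 \<noteq> 0"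
    using assms by simp
  then show "(x\<^sub>2 - x) / (x\<^sub>2 - x\<^sub>1) + (x - x\<^sub>1) / (x\<^sub>2 - x\<^sub>1) = 1"
    "(x\<^sub>2 - x) / (x\<^sub>2 - x\<^sub>1) * x\<^sub>1 + (x - x\<^sub>1) / (x\<^sub>2 - x\<^sub>1) * x\<^sub>2 = x"
    by (simp_all add: divide_simps) (simp add: algebra_simps)
qed

lemma proj_map_in_interior_convex_hull:
  assumes "s\<^sub>1 < s" "s < s\<^sub>2" "t\<^sub>1 < t" "t < t\<^sub>2" "0 < s\<^sub>1 + t\<^sub>1"
  shows "proj_map s t \<in> interior (convex hull
           {proj_map s\<^sub>1 t\<^sub>1, proj_map s\<^sub>2 t\<^sub>1, proj_map s\<^sub>2 t\<^sub>2, proj_map s\<^sub>1 t\<^sub>2})"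
proof -
  have pos: "0 < s\<^sub>1 + t\<^sub>1" "0 < s\<^sub>2 + t\<^sub>1" "0 < s\<^sub>1 + t\<^sub>2" "0 < s\<^sub>2 + t\<^sub>2" "0 < s + t"
    using assms by linarith+
  obtain a\<^sub>1 a\<^sub>2 where a: "0 < a\<^sub>1" "0 < a\<^sub>2" "a\<^sub>1 + a\<^sub>2 = 1" "a\<^sub>1 * s\<^sub>1 + a\<^sub>2 * s\<^sub>2 = s"
    using assms(1,2) by (rule strict_convex_combination_between)
  obtain b\<^sub>1 b\<^sub>2 where b: "0 < b\<^sub>1" "0 < b\<^sub>2" "b\<^sub>1 + b\<^sub>2 = 1" "b\<^sub>1 * t\<^sub>1 + b\<^sub>2 * t\<^sub>2 = t"
    using assms(3,4) by (rule strict_convex_combination_between)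
  define w where "w a b s' t' = a * b * (s' + t') / (s + t)" for a b s' t' :: real
  have w: "w a b s' t' *\<^sub>R proj_map s' t' = (a * b / (s + t)) *\<^sub>R Complex t' 1"
    if "0 < s' + t'" for a b s' t'
    using that by (simp add: w_def proj_map_eq_scaleR)
  have "w a\<^sub>1 b\<^sub>1 s\<^sub>1 t\<^sub>1 + w a\<^sub>2 b\<^sub>1 s\<^sub>2 t\<^sub>1 + w a\<^sub>2 b\<^sub>2 s\<^sub>2 t\<^sub>2 + w a\<^sub>1 b\<^sub>2 s\<^sub>1 t\<^sub>2
      = ((a\<^sub>1 * s\<^sub>1 + a\<^sub>2 * s\<^sub>2) * (b\<^sub>1 + b\<^sub>2) + (a\<^sub>1 + a\<^sub>2) * (b\<^sub>1 * t\<^sub>1 + b\<^sub>2 * t\<^sub>2)) / (s + t)"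
    by (simp add: w_def add_divide_distrib[symmetric] algebra_simps)
  also have "\<dots> = 1"
    using a b pos by simp
  finally have sum: "w a\<^sub>1 b\<^sub>1 s\<^sub>1 t\<^sub>1 + w a\<^sub>2 b\<^sub>1 s\<^sub>2 t\<^sub>1 + w a\<^sub>2 b\<^sub>2 s\<^sub>2 t\<^sub>2 + w a\<^sub>1 b\<^sub>2 s\<^sub>1 t\<^sub>2 = 1" .
  have "w a\<^sub>1 b\<^sub>1 s\<^sub>1 t\<^sub>1 *\<^sub>R proj_map s\<^sub>1 t\<^sub>1 + w a\<^sub>2 b\<^sub>1 s\<^sub>2 t\<^sub>1 *\<^sub>R proj_map s\<^sub>2 t\<^sub>1
      + w a\<^sub>2 b\<^sub>2 s\<^sub>2 t\<^sub>2 *\<^sub>R proj_map s\<^sub>2 t\<^sub>2 + w a\<^sub>1 b\<^sub>2 s\<^sub>1 t\<^sub>2 *\<^sub>R proj_map s\<^sub>1 t\<^sub>2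
      = ((a\<^sub>1 + a\<^sub>2) / (s + t)) *\<^sub>R Complex (b\<^sub>1 * t\<^sub>1 + b\<^sub>2 * t\<^sub>2) (b\<^sub>1 + b\<^sub>2)"
    using pos by (simp add: w complex_eq_iff add_divide_distrib[symmetric] algebra_simps)
  also have "\<dots> = proj_map s t"
    using a b by (simp add: proj_map_eq_scaleR)
  finally have comb: "w a\<^sub>1 b\<^sub>1 s\<^sub>1 t\<^sub>1 *\<^sub>R proj_map s\<^sub>1 t\<^sub>1 + w a\<^sub>2 b\<^sub>1 s\<^sub>2 t\<^sub>1 *\<^sub>R proj_map s\<^sub>2 t\<^sub>1
      + w a\<^sub>2 b\<^sub>2 s\<^sub>2 t\<^sub>2 *\<^sub>R proj_map s\<^sub>2 t\<^sub>2 + w a\<^sub>1 b\<^sub>2 s\<^sub>1 t\<^sub>2 *\<^sub>R proj_map s\<^sub>1 t\<^sub>2 = proj_map s t" .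
  have w_pos: "0 < w a\<^sub>1 b\<^sub>1 s\<^sub>1 t\<^sub>1" "0 < w a\<^sub>2 b\<^sub>1 s\<^sub>2 t\<^sub>1" "0 < w a\<^sub>2 b\<^sub>2 s\<^sub>2 t\<^sub>2" "0 < w a\<^sub>1 b\<^sub>2 s\<^sub>1 t\<^sub>2"
    using a b pos by (simp_all add: w_def)
  have "convex_quadrilateral (proj_map s\<^sub>1 t\<^sub>1) (proj_map s\<^sub>2 t\<^sub>1) (proj_map s\<^sub>2 t\<^sub>2) (proj_map s\<^sub>1 t\<^sub>2)"
    using assms(1-5) by (intro convex_quadrilateral_proj_map) linarith+
  from convex_combination_in_interior_quadrilateral[OF this w_pos sum] show ?thesis
    by (simp only: comb)
qed

lemma proj_map_in_closed_segment_fst: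
  assumes "0 < s\<^sub>1 + t" "s\<^sub>1 \<le> s" "s \<le> s\<^sub>2"
  shows "proj_map s t \<in> closed_segment (proj_map s\<^sub>1 t) (proj_map s\<^sub>2 t)"
proof -
  have "1 / (s\<^sub>2 + t) \<le> 1 / (s + t)" "1 / (s + t) \<le> 1 / (s\<^sub>1 + t)"
    using assms by (simp_all add: divide_left_mono)
  then have "1 / (s + t) \<in> closed_segment (1 / (s\<^sub>1 + t)) (1 / (s\<^sub>2 + t))"
    by (auto simp: closed_segment_eq_real_ivl)
  then have "(\<lambda>c. c *\<^sub>R Complex t 1) (1 / (s + t)) \<in> closed_segment
      ((\<lambda>c. c *\<^sub>R Complex t 1) (1 / (s\<^sub>1 + t))) ((\<lambda>c. c *\<^sub>R Complex t 1) (1 / (s\<^sub>2 + t)))"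
    by (subst closed_segment_linear_image) (auto intro: linear_scaleR_left)
  then show ?thesis
    by (simp add: proj_map_eq_scaleR)
qed

text \<open>\<open>\<sigma> - t\<^sub>0\<close> is the \<open>s\<close>-coordinate of the foot of the perpendicular from \<open>proj_map s t\<close> to the
  image of the line \<open>t = t\<^sub>0\<close>.\<close>
lemma proj_map_circle_touches_segment_fst:
  fixes s t s\<^sub>1 s\<^sub>2 t\<^sub>0 :: real
  defines "\<sigma> \<equiv> (s + t) * (1 + t\<^sub>0\<^sup>2) / (1 + t * t\<^sub>0)"
  assumes "0 < s\<^sub>1 + t\<^sub>0" "0 < s + t" "0 < 1 + t * t\<^sub>0" "s\<^sub>1 + t\<^sub>0 \<le> \<sigma>" "\<sigma> \<le> s\<^sub>2 + t\<^sub>0"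
  shows "circle_touches_segment (proj_map s t) (\<bar>t - t\<^sub>0\<bar> / ((s + t) * sqrt (1 + t\<^sub>0\<^sup>2)))
           (proj_map s\<^sub>1 t\<^sub>0) (proj_map s\<^sub>2 t\<^sub>0) (proj_map (\<sigma> - t\<^sub>0) t\<^sub>0)"
proof -
  define c where "c = (t - t\<^sub>0) / ((s + t) * (1 + t\<^sub>0\<^sup>2))"
  have "0 < 1 + t\<^sub>0\<^sup>2"
    by (simp add: add_pos_nonneg)
  have "proj_map (\<sigma> - t\<^sub>0) t\<^sub>0 = (1 / \<sigma>) *\<^sub>R Complex t\<^sub>0 1"
    by (simp add: proj_map_eq_scaleR)
  also have "\<dots> = ((1 + t * t\<^sub>0) / ((s + t) * (1 + t\<^sub>0\<^sup>2))) *\<^sub>R Complex t\<^sub>0 1"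
    by (simp add: \<sigma>_def)
  finally have "proj_map s t - proj_map (\<sigma> - t\<^sub>0) t\<^sub>0
      = (1 / (s + t)) *\<^sub>R Complex t 1 - ((1 + t * t\<^sub>0) / ((s + t) * (1 + t\<^sub>0\<^sup>2))) *\<^sub>R Complex t\<^sub>0 1"
    by (simp add: proj_map_eq_scaleR)
  also have "\<dots> = c *\<^sub>R Complex 1 (- t\<^sub>0)"
    using assms(3) \<open>0 < 1 + t\<^sub>0\<^sup>2\<close>
    by (simp add: c_def complex_eq_iff divide_simps) (simp add: algebra_simps power2_eq_square)
  finally have foot: "proj_map s t - proj_map (\<sigma> - t\<^sub>0) t\<^sub>0 = c *\<^sub>R Complex 1 (- t\<^sub>0)" .
  have "proj_map (\<sigma> - t\<^sub>0) t\<^sub>0 \<in> closed_segment (proj_map s\<^sub>1 t\<^sub>0) (proj_map s\<^sub>2 t\<^sub>0)"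
    using assms(2,5,6) by (intro proj_map_in_closed_segment_fst) auto
  moreover have "inner (proj_map s t - proj_map (\<sigma> - t\<^sub>0) t\<^sub>0) (proj_map s\<^sub>2 t\<^sub>0 - proj_map s\<^sub>1 t\<^sub>0) = 0"
    using assms(2,5,6) unfolding foot
    by (subst proj_map_diff_fst) (auto simp: inner_complex_def)
  moreover have "dist (proj_map s t) (proj_map (\<sigma> - t\<^sub>0) t\<^sub>0) = \<bar>t - t\<^sub>0\<bar> / ((s + t) * sqrt (1 + t\<^sub>0\<^sup>2))"
  proof -
    have "dist (proj_map s t) (proj_map (\<sigma> - t\<^sub>0) t\<^sub>0) = \<bar>c\<bar> * sqrt (1 + t\<^sub>0\<^sup>2)"
      by (simp add: dist_norm foot complex_norm)
    also have "\<dots> = \<bar>t - t\<^sub>0\<bar> / ((s + t) * sqrt (1 + t\<^sub>0\<^sup>2))"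
    proof -
      define q where "q = sqrt (1 + t\<^sub>0\<^sup>2)"
      have q: "1 + t\<^sub>0\<^sup>2 = q * q" "0 < q"
        unfolding q_def by (simp_all add: add_pos_nonneg)
      show ?thesis
        unfolding c_def q_def[symmetric] q(1) using assms(3) q(2) by (simp add: abs_mult abs_divide)
    qed
    finally show ?thesis .
  qed
  ultimately show ?thesis
    unfolding circle_touches_segment_def by blast
qed

section \<open>The image of a square\<close>

lemma sinh_add_pos_iff: "0 < sinh x + sinh y \<longleftrightarrow> 0 < x + (y::real)"
proof -
  have "0 < sinh x + sinh y \<longleftrightarrow> sinh (- y) < sinh x"
    by auto
  also have "\<dots> \<longleftrightarrow> - y < x"
    by (rule sinh_real_less_iff)
  also have "\<dots> \<longleftrightarrow> 0 < x + y"
    by linarith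
  finally show ?thesis .
qed

lemma sinh_div_cosh_bounds:
  fixes u h :: real
  assumes "0 < h"
  shows "sinh (u - h) < sinh u / cosh h" "sinh u / cosh h < sinh (u + h)"
proof -
  have "sinh u = sinh (u - h) * cosh h + cosh (u - h) * sinh h"
    using sinh_add[of "u - h" h] by simp
  moreover have "sinh u = sinh (u + h) * cosh h - cosh (u + h) * sinh h"
    using sinh_diff[of "u + h" h] by simp
  moreover have "0 < cosh (u - h) * sinh h" "0 < cosh (u + h) * sinh h"
    using assms by simp_all
  ultimately show "sinh (u - h) < sinh u / cosh h" "sinh u / cosh h < sinh (u + h)"
    by (simp_all add: field_simps)
qed

text \<open>The square with centre \<open>(u, v)\<close> and half-side \<open>h\<close> in the coordinates \<open>(x * ln a, y * ln a)\<close>;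
  the condition on \<open>u + v\<close> says that it lies in the half-plane \<open>x + y > 0\<close>.\<close>
locale sinh_square =
  fixes u v h :: real
  assumes h_pos: "0 < h" and corner_pos: "2 * h < u + v"
begin

definition A :: complex where "A = proj_map (sinh (u - h)) (sinh (v - h))"
definition B :: complex where "B = proj_map (sinh (u + h)) (sinh (v - h))"
definition C :: complex where "C = proj_map (sinh (u + h)) (sinh (v + h))"
definition D :: complex where "D = proj_map (sinh (u - h)) (sinh (v + h))"

definition incentre :: complex where "incentre = proj_map (sinh u / cosh h) (sinh v / cosh h)"
definition inradius :: real where "inradius = sinh h / (sinh u + sinh v)"

lemma sinh_sum_pos: "0 < sinh u + sinh v"
  using corner_pos h_pos by (simp add: sinh_add_pos_iff)

lemma inradius_pos: "0 < inradius"
  using h_pos sinh_sum_pos by (simp add: inradius_def)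

lemma convex_quadrilateral_ABCD: "convex_quadrilateral A B C D"
  unfolding A_def B_def C_def D_def
  using h_pos corner_pos by (intro convex_quadrilateral_proj_map) (simp_all add: sinh_add_pos_iff)

lemma incentre_in_interior: "incentre \<in> interior (convex hull {A, B, C, D})"
  unfolding incentre_def A_def B_def C_def D_def
  using sinh_div_cosh_bounds[OF h_pos] corner_pos
  by (intro proj_map_in_interior_convex_hull) (simp_all add: sinh_add_pos_iff)

lemma tangency_point_between_corners:
  assumes "k = h \<or> k = - h"
  shows "(sinh (u - h) + sinh (v - k)) * cosh v \<le> (sinh u + sinh v) * cosh (v - k)"
    "(sinh u + sinh v) * cosh (v - k) \<le> (sinh (u + h) + sinh (v - k)) * cosh v"
proof -
  have pyth: "cosh v ^ 2 = sinh v ^ 2 + 1"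
    by (rule cosh_square_eq)
  from assms consider "k = h" | "k = - h"
    by blast
  then obtain c\<^sub>1 c\<^sub>2 where
    "(sinh u + sinh v) * cosh (v - k) - (sinh (u - h) + sinh (v - k)) * cosh v = sinh h * c\<^sub>1"
    "(sinh (u + h) + sinh (v - k)) * cosh v - (sinh u + sinh v) * cosh (v - k) = sinh h * c\<^sub>2"
    and "0 \<le> c\<^sub>1" "0 \<le> c\<^sub>2"
  proof cases
    case 1
    show ?thesis
    proof (rule that)
      show "(sinh u + sinh v) * cosh (v - k) - (sinh (u - h) + sinh (v - k)) * cosh v
          = sinh h * (cosh (u - v) + 1)"
        "(sinh (u + h) + sinh (v - k)) * cosh v - (sinh u + sinh v) * cosh (v - k)
          = sinh h * (cosh (u + v) - 1)"
        using pyth unfolding 1 sinh_add sinh_diff cosh_add cosh_diff by algebra+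
    qed (use cosh_real_ge_1[of "u - v"] cosh_real_ge_1[of "u + v"] in linarith)+
  next
    case 2
    show ?thesis
    proof (rule that)
      show "(sinh u + sinh v) * cosh (v - k) - (sinh (u - h) + sinh (v - k)) * cosh v
          = sinh h * (cosh (u + v) - 1)"
        "(sinh (u + h) + sinh (v - k)) * cosh v - (sinh u + sinh v) * cosh (v - k)
          = sinh h * (cosh (u - v) + 1)"
        using pyth unfolding 2 sinh_add sinh_diff cosh_add cosh_diff sinh_minus cosh_minus by algebra+
    qed (use cosh_real_ge_1[of "u - v"] cosh_real_ge_1[of "u + v"] in linarith)+
  qed
  moreover have "0 \<le> sinh h * c\<^sub>1" "0 \<le> sinh h * c\<^sub>2"
    using h_pos \<open>0 \<le> c\<^sub>1\<close> \<open>0 \<le> c\<^sub>2\<close> by simp_all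
  ultimately show "(sinh (u - h) + sinh (v - k)) * cosh v \<le> (sinh u + sinh v) * cosh (v - k)"
    "(sinh u + sinh v) * cosh (v - k) \<le> (sinh (u + h) + sinh (v - k)) * cosh v"
    by linarith+
qed

text \<open>The distance from the incentre to the line \<open>t = sinh (v - k)\<close> is the inradius because
  \<open>sinh v = sinh (v - k) * cosh h + cosh (v - k) * sinh k\<close>.\<close>
lemma incentre_touches_side_fst:
  assumes "k = h \<or> k = - h"
  shows "\<exists>F. circle_touches_segment incentre inradius
           (proj_map (sinh (u - h)) (sinh (v - k))) (proj_map (sinh (u + h)) (sinh (v - k))) F"
proof -
  define w where "w = v - k"
  define s t where "s = sinh u / cosh h" and "t = sinh v / cosh h"
  have k: "cosh k = cosh h" "\<bar>sinh k\<bar> = sinh h"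
    using assms h_pos by auto
  have "cosh h = cosh v * cosh w - sinh v * sinh w"
    using cosh_diff[of v w] k(1) by (simp add: w_def)
  then have denom: "1 + t * sinh w = cosh w * cosh v / cosh h"
    by (simp add: t_def field_simps)
  have "sinh v = sinh w * cosh h + cosh w * sinh k"
    using sinh_add[of w k] k(1) by (simp add: w_def)
  then have num: "t - sinh w = sinh k * cosh w / cosh h"
    by (simp add: t_def field_simps)
  have sq: "1 + (sinh w)\<^sup>2 = (cosh w)\<^sup>2"
    by (simp add: cosh_square_eq)
  have sum: "s + t = (sinh u + sinh v) / cosh h"
    by (simp add: s_def t_def add_divide_distrib)
  have foot: "(s + t) * (1 + (sinh w)\<^sup>2) / (1 + t * sinh w) = (sinh u + sinh v) * cosh w / cosh v"
    unfolding denom sum sq by (simp add: field_simps power2_eq_square)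
  have radius: "\<bar>t - sinh w\<bar> / ((s + t) * sqrt (1 + (sinh w)\<^sup>2)) = inradius"
    unfolding num sum sq inradius_def using k(2) by (simp add: abs_mult)
  have "0 < sinh (u - h) + sinh w"
    using assms corner_pos h_pos by (auto simp: w_def sinh_add_pos_iff)
  moreover have "0 < s + t" "0 < 1 + t * sinh w"
    unfolding sum denom using sinh_sum_pos by simp_all
  moreover have "sinh (u - h) + sinh w \<le> (s + t) * (1 + (sinh w)\<^sup>2) / (1 + t * sinh w)"
    "(s + t) * (1 + (sinh w)\<^sup>2) / (1 + t * sinh w) \<le> sinh (u + h) + sinh w"
    unfolding foot using tangency_point_between_corners[OF assms, folded w_def] by (simp_all add: field_simps)
  ultimately show ?thesis
    using proj_map_circle_touches_segment_fst[of "sinh (u - h)" "sinh w" s t "sinh (u + h)"]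
    unfolding radius incentre_def s_def[symmetric] t_def[symmetric] w_def[symmetric] by blast
qed

text \<open>Exchanging \<open>u\<close> and \<open>v\<close> reflects the whole picture in the line \<open>Re z = 1/2\<close>
  and exchanges the two pairs of opposite sides.\<close>
lemma incentre_touches_side_snd:
  assumes "k = h \<or> k = - h"
  shows "\<exists>F. circle_touches_segment incentre inradius
           (proj_map (sinh (u - k)) (sinh (v - h))) (proj_map (sinh (u - k)) (sinh (v + h))) F"
proof -
  interpret swapped: sinh_square v u h
    using h_pos corner_pos by unfold_locales simp_all
  obtain F where "circle_touches_segment swapped.incentre swapped.inradius
      (proj_map (sinh (v - h)) (sinh (u - k))) (proj_map (sinh (v + h)) (sinh (u - k))) F"
    using swapped.incentre_touches_side_fst[OF assms] by blast
  then have reflected: "circle_touches_segment (1 - cnj swapped.incentre) swapped.inradius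
      (1 - cnj (proj_map (sinh (v - h)) (sinh (u - k)))) (1 - cnj (proj_map (sinh (v + h)) (sinh (u - k))))
      (1 - cnj F)"
    by (rule circle_touches_segment_reflect)
  have "0 < sinh (u - k) + sinh (v - h)" "0 < sinh (u - k) + sinh (v + h)"
    using assms h_pos corner_pos by (auto simp: sinh_add_pos_iff)
  then have corners: "proj_map (sinh (u - k)) (sinh (v - h)) = 1 - cnj (proj_map (sinh (v - h)) (sinh (u - k)))"
    "proj_map (sinh (u - k)) (sinh (v + h)) = 1 - cnj (proj_map (sinh (v + h)) (sinh (u - k)))"
    by (simp_all add: less_imp_neq[symmetric] proj_map_swap[of "sinh (u - k)"])
  have incentre_eq: "incentre = 1 - cnj swapped.incentre"
    unfolding incentre_def swapped.incentre_def using sinh_sum_pos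
    by (intro proj_map_swap) (simp add: add_divide_distrib[symmetric])
  have inradius_eq: "inradius = swapped.inradius"
    by (simp add: inradius_def swapped.inradius_def add.commute)
  show ?thesis
    unfolding corners incentre_eq inradius_eq using reflected by blast
qed

lemma incentre_touches_sides:
  obtains F\<^sub>1 F\<^sub>2 F\<^sub>3 F\<^sub>4 where
    "circle_touches_segment incentre inradius A B F\<^sub>1" "circle_touches_segment incentre inradius B C F\<^sub>2"
    "circle_touches_segment incentre inradius C D F\<^sub>3" "circle_touches_segment incentre inradius D A F\<^sub>4"
proof -
  obtain F\<^sub>1 F\<^sub>2 F\<^sub>3 F\<^sub>4 where
    "circle_touches_segment incentre inradius A B F\<^sub>1" "circle_touches_segment incentre inradius B C F\<^sub>2"
    "circle_touches_segment incentre inradius D C F\<^sub>3" "circle_touches_segment incentre inradius A D F\<^sub>4"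
    using incentre_touches_side_fst[of h] incentre_touches_side_fst[of "- h"]
      incentre_touches_side_snd[of "- h"] incentre_touches_side_snd[of h]
    by (auto simp: A_def B_def C_def D_def)
  then show ?thesis
    using that circle_touches_segment_commute by blast
qed

lemma tangential_ABCD: "tangential_quadrilateral A B C D"
  using incentre_touches_sides
  by (metis tangential_quadrilateralI convex_quadrilateral_ABCD inradius_pos incentre_in_interior)

lemma pitot_ABCD: "dist A B + dist C D = dist B C + dist D A"
  using incentre_touches_sides by (metis pitot_if_circle_touches_sides)

end

theorem theorem6p1:
  fixes a :: real
  assumes "a > 1"
  shows "(\<forall>c. \<exists>d. d \<noteq> 0 \<and> (\<forall>y. c + y > 0 \<longrightarrow> T a c y \<in> line_through 1 d))
    \<and> (\<forall>c. \<exists>d. d \<noteq> 0 \<and> (\<forall>x. x + c > 0 \<longrightarrow> T a x c \<in> line_through 0 d))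
    \<and> (\<forall>x y l. l > 0 \<and> x + y > 0 \<longrightarrow>
         (let A' = T a x y; B' = T a (x + l) y; C' = T a (x + l) (y + l); D' = T a x (y + l)
          in tangential_quadrilateral A' B' C' D' \<and>
             dist A' B' + dist C' D' = dist B' C' + dist D' A'))"
proof (intro conjI allI impI)
  define L where "L = ln a"
  have L: "0 < L"
    using assms by (simp add: L_def)
  have T: "T a x y = proj_map (sinh (x * L)) (sinh (y * L))" for x y
    using assms by (simp add: L_def T_eq_proj_map_sinh)
  have pos: "0 < sinh (x * L) + sinh (y * L)" if "0 < x + y" for x y
    unfolding sinh_add_pos_iff distrib_right[symmetric] using L that by simp
  show "\<exists>d. d \<noteq> 0 \<and> (\<forall>y. c + y > 0 \<longrightarrow> T a c y \<in> line_through 1 d)" for c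
  proof (intro exI conjI allI impI)
    show "Complex (- sinh (c * L)) 1 \<noteq> 0"
      by (simp add: complex_eq_iff)
    show "T a c y \<in> line_through 1 (Complex (- sinh (c * L)) 1)" if "c + y > 0" for y
      unfolding T using pos[OF that] by (intro proj_map_in_line_through_1) simp
  qed
  show "\<exists>d. d \<noteq> 0 \<and> (\<forall>x. x + c > 0 \<longrightarrow> T a x c \<in> line_through 0 d)" for c
    by (intro exI[of _ "Complex (sinh (c * L)) 1"]) (simp add: T complex_eq_iff proj_map_in_line_through_0)
  fix x y l :: real
  assume "l > 0 \<and> x + y > 0"
  then interpret sinh_square "(x + l / 2) * L" "(y + l / 2) * L" "l / 2 * L"
    using L by unfold_locales (simp_all add: distrib_right[symmetric])
  have "T a x y = A" "T a (x + l) y = B" "T a (x + l) (y + l) = C" "T a x (y + l) = D"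
    unfolding T A_def B_def C_def D_def by (simp_all add: algebra_simps)
  then show "let A' = T a x y; B' = T a (x + l) y; C' = T a (x + l) (y + l); D' = T a x (y + l)
      in tangential_quadrilateral A' B' C' D' \<and> dist A' B' + dist C' D' = dist B' C' + dist D' A'"
    using tangential_ABCD pitot_ABCD by simp
qed

end
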